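(* Let $\mathcal I_1\subset\mathbb C[L^-\mathrm{GL}_K]$ be the ideal of the scheme-theoretic image $\mathcal M^1$ of $\pi_1$, and let $\mathcal I'_1$ be the ideal generated by the elements $T^{(m)}_{ab}T^{(n+k)}_{cd}-T^{(n)}_{ab}T^{(m+k)}_{cd}$ and $T^{(m)}_{a_1b_1}T^{(n)}_{a_2b_2}-T^{(m)}_{a_1b_2}T^{(n)}_{a_2b_1}$ for all $m,n,k\in\mathbb Z_{\ge0}$ and $a,b,c,d,a_1,a_2,b_1,b_2\in\{1,\dots,K\}$. If $\mathcal I'_1$ is a radical ideal, then $\mathcal I_1=\mathcal I'_1$.
   Context: $L^-\mathrm{GL}_K$ is the group scheme of power series $1+\sum_{i\ge1}g_iz^{-i}$, $g_i\in\mathfrak{gl}_K$, with $\mathbb C[L^-\mathrm{GL}_K]=\mathbb C[T^{(n)}_{ab}:n\ge0,1\le a,b\le K]$, $T^{(n)}_{ab}$ the $(a,b)$ entry of $g_{n+1}$. $\mathcal M(1,K)=\mathrm{Rep}(1,K)/\!/\mathrm{GL}_1$, where $\mathrm{Rep}(1,K)$ consists of $(B,\psi,\overline\psi)$, $B\in\mathbb C$, $\psi\in\mathrm{Mat}_{1\times K}$, $\overline\psi\in\mathrm{Mat}_{K\times1}$, $\lambda\cdot(B,\psi,\overline\psi)=(B,\lambda\psi,\lambda^{-1}\overline\psi)$. $\pi_1:\mathcal M(1,K)\to L^-\mathrm{GL}_K$ sends $(B,\psi,\overline\psi)$ to $1+\overline\psi(z-\widetilde B/2)^{-1}\psi$,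 $\widetilde B=B+\psi\overline\psi$; its image consists of series $1+g/(z-b)$ with $b\in\mathbb C$ and $\mathrm{rank}(g)\le1$. *)

theory Defs
  imports Complex_Main "HOL-Library.Poly_Mapping"
begin

text \<open>Coordinate variables of the loop group: T n a b is the (a,b) entry of g_(n+1).
  Indices a,b range over a finite type 'k with CARD('k) = K.\<close>

type_synonym 'k var = "nat \<times> 'k \<times> 'k"

text \<open>The polynomial ring C[T^(n)_ab : n \<ge> 0, a,b] (infinitely many variables),
  polynomials = finitely supported functions from monomials (exponent vectors) to C.\<close>
type_synonym 'k cpoly = "('k var \<Rightarrow>\<^sub>0 nat) \<Rightarrow>\<^sub>0 complex"

definition Tvar :: "nat \<Rightarrow> 'k \<Rightarrow> 'k \<Rightarrow> 'k cpoly" where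
  "Tvar n a b = Poly_Mapping.single (Poly_Mapping.single (n, a, b) 1) 1"

definition mono_eval :: "('k var \<Rightarrow>\<^sub>0 nat) \<Rightarrow> ('k var \<Rightarrow> complex) \<Rightarrow> complex" where
  "mono_eval mn x = (\<Prod>v\<in>Poly_Mapping.keys mn. x v ^ Poly_Mapping.lookup mn v)"

definition peval :: "'k cpoly \<Rightarrow> ('k var \<Rightarrow> complex) \<Rightarrow> complex" where
  "peval p x = (\<Sum>mn\<in>Poly_Mapping.keys p. Poly_Mapping.lookup p mn * mono_eval mn x)"

definition is_ideal :: "'a::comm_ring_1 set \<Rightarrow> bool" where
  "is_ideal I \<longleftrightarrow> 0 \<in> I \<and> (\<forall>x\<in>I. \<forall>y\<in>I. x + y \<in> I) \<and> (\<forall>r. \<forall>x\<in>I. r * x \<in> I)"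

definition ideal_gen :: "'a::comm_ring_1 set \<Rightarrow> 'a set" where
  "ideal_gen S = \<Inter>{I. is_ideal I \<and> S \<subseteq> I}"

definition is_radical :: "'a::comm_ring_1 set \<Rightarrow> bool" where
  "is_radical I \<longleftrightarrow> (\<forall>f (n::nat). f ^ n \<in> I \<longrightarrow> f \<in> I)"

text \<open>The map pi_1: (B, psi, psibar) \<mapsto> 1 + psibar (z - Bt/2)^(-1) psi, Bt = B + psi psibar.
  Expanding, g_(n+1) = (Bt/2)^n psibar psi, so T^(n)_ab \<mapsto> (Bt/2)^n psibar_a psi_b.\<close>
definition pi1 :: "complex \<Rightarrow> ('k::finite \<Rightarrow> complex) \<Rightarrow> ('k \<Rightarrow> complex) \<Rightarrow> 'k var \<Rightarrow> complex" where
  "pi1 B psi psibar = (\<lambda>(n, a, b).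
     ((B + (\<Sum>c\<in>UNIV. psi c * psibar c)) / 2) ^ n * psibar a * psi b)"

text \<open>Ideal of the scheme-theoretic image of pi_1: kernel of the pullback
  C[L^-GL_K] \<rightarrow> C[M(1,K)] \<subseteq> C[Rep(1,K)]; since Rep(1,K) is an affine space
  (reduced, C infinite) this is the set of polynomials vanishing on the image.\<close>
definition I1 :: "('k::finite) cpoly set" where
  "I1 = {f. \<forall>B psi psibar. peval f (pi1 B psi psibar) = 0}"

definition I1' :: "('k::finite) cpoly set" where
  "I1' = ideal_gen
     ({Tvar m a b * Tvar (n + k) c d - Tvar n a b * Tvar (m + k) c d
        | m n k a b c d. True} \<union>
      {Tvar m a1 b1 * Tvar n a2 b2 - Tvar m a1 b2 * Tvar n a2 b1
        | m n a1 a2 b1 b2. True})"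

end

theory Submission
  imports Defs
begin

text \<open>
  Writing t = (B + \<psi>\<psi>bar)/2, which takes every complex value as B varies, the coordinates of
  \<pi>1(B, \<psi>, \<psi>bar) are T^(n)_ab = t^n \<psi>bar_a \<psi>_b. So a monomial in the T's evaluates to a
  character of the multiplicative monoid of parameters (t, \<psi>bar, \<psi>), and two monomials give
  the same character iff they have the same multidegree: the same sum of upper indices and the
  same multisets of row and of column indices. By Dedekind's independence of characters, a
  polynomial vanishing on the image has, for each character, coefficients summing to zero, so
  it is a combination of binomials x^M - x^N with M, N of equal multidegree. Each such binomial
  lies in I1': using the generators, a variable in row a times one in column b can be rewritten
  as T^(0)_ab times another variable, so both monomials acquire the common factor T^(0)_ab and
  induction on the degree applies. The reverse inclusion is a direct check on the generators.
\<close>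

\<comment> \<open>var_exp and total_degree are definitions, not abbreviations: the simplifier rewrites
  (1::nat) to Suc 0, after which rules stated for the unfolded forms would no longer match.\<close>
definition var_exp :: "'a \<Rightarrow> 'a \<Rightarrow>\<^sub>0 nat" where
  "var_exp v = Poly_Mapping.single v 1"

lemma lookup_var_exp: "Poly_Mapping.lookup (var_exp v) w = of_bool (v = w)"
  by (simp add: var_exp_def lookup_single)

lemma keys_var_exp [simp]: "Poly_Mapping.keys (var_exp v) = {v}"
  by (simp add: var_exp_def)

abbreviation monomial :: "('k var \<Rightarrow>\<^sub>0 nat) \<Rightarrow> 'k cpoly" where
  "monomial M \<equiv> Poly_Mapping.single M 1"

lemma poly_mapping_sum_single:
  "(\<Sum>k\<in>Poly_Mapping.keys p. Poly_Mapping.single k (Poly_Mapping.lookup p k)) = p"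
  by (rule poly_mapping_eqI) (simp add: lookup_sum lookup_single when_def sum.delta in_keys_iff)

lemma lookup_sum_single:
  assumes "finite A"
  shows "Poly_Mapping.lookup (\<Sum>x\<in>A. Poly_Mapping.single (\<phi> x) (c x)) k = (\<Sum>x\<in>{x\<in>A. \<phi> x = k}. c x)"
  using assms by (simp add: lookup_sum lookup_single when_def sum.inter_filter)

lemma in_keys_split:
  fixes M :: "'a \<Rightarrow>\<^sub>0 nat"
  assumes "v \<in> Poly_Mapping.keys M"
  obtains R where "M = var_exp v + R"
proof
  have "Poly_Mapping.lookup M v \<ge> 1" using assms by (simp add: in_keys_iff)
  then show "M = var_exp v + (M - var_exp v)"
    by (intro poly_mapping_eqI) (auto simp: lookup_add lookup_minus lookup_var_exp)
qed

lemma mono_eval_superset: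
  assumes "finite S" "Poly_Mapping.keys M \<subseteq> S"
  shows "mono_eval M x = (\<Prod>v\<in>S. x v ^ Poly_Mapping.lookup M v)"
  unfolding mono_eval_def
  by (rule prod.mono_neutral_left) (use assms in \<open>auto simp: in_keys_iff\<close>)

lemma mono_eval_add: "mono_eval (M + N) x = mono_eval M x * mono_eval N x"
proof -
  let ?S = "Poly_Mapping.keys M \<union> Poly_Mapping.keys N"
  have "mono_eval (M + N) x = (\<Prod>v\<in>?S. x v ^ Poly_Mapping.lookup (M + N) v)"
    by (rule mono_eval_superset) (simp_all add: keys_add)
  also have "\<dots> = (\<Prod>v\<in>?S. x v ^ Poly_Mapping.lookup M v) * (\<Prod>v\<in>?S. x v ^ Poly_Mapping.lookup N v)"
    by (simp add: lookup_add power_add prod.distrib)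
  also have "(\<Prod>v\<in>?S. x v ^ Poly_Mapping.lookup M v) = mono_eval M x"
    by (rule mono_eval_superset[symmetric]) auto
  also have "(\<Prod>v\<in>?S. x v ^ Poly_Mapping.lookup N v) = mono_eval N x"
    by (rule mono_eval_superset[symmetric]) auto
  finally show ?thesis .
qed

lemma mono_eval_var_exp: "mono_eval (var_exp v) x = x v"
  by (simp add: mono_eval_def lookup_var_exp)

lemma mono_eval_mult_point: "mono_eval M (\<lambda>v. x v * y v) = mono_eval M x * mono_eval M y"
  by (simp add: mono_eval_def power_mult_distrib prod.distrib)

lemma peval_zero [simp]: "peval 0 x = 0"
  by (simp add: peval_def)

lemma peval_add: "peval (p + q) x = peval p x + peval q x"
  unfolding peval_def
  by (rule setsum_keys_plus_distrib[where f = "\<lambda>k c. c * mono_eval k x"]) (simp_all add: algebra_simps)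

lemma peval_single: "peval (Poly_Mapping.single M c) x = c * mono_eval M x"
  by (simp add: peval_def)

lemma peval_sum: "peval (sum p A) x = (\<Sum>i\<in>A. peval (p i) x)"
  by (induction A rule: infinite_finite_induct) (simp_all add: peval_add)

lemma peval_diff: "peval (p - q) x = peval p x - peval q x"
  using peval_add[of "p - q" q x] by simp

lemma peval_mult: "peval (p * q) x = peval p x * peval q x"
proof -
  let ?c = "Poly_Mapping.lookup p" and ?d = "Poly_Mapping.lookup q"
  have "p * q = (\<Sum>M\<in>Poly_Mapping.keys p. Poly_Mapping.single M (?c M)) *
                (\<Sum>N\<in>Poly_Mapping.keys q. Poly_Mapping.single N (?d N))"
    by (simp only: poly_mapping_sum_single)
  also have "\<dots> = (\<Sum>M\<in>Poly_Mapping.keys p. \<Sum>N\<in>Poly_Mapping.keys q. Poly_Mapping.single (M + N) (?c M * ?d N))"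
    by (simp add: sum_product mult_single)
  finally have "peval (p * q) x = (\<Sum>M\<in>Poly_Mapping.keys p. \<Sum>N\<in>Poly_Mapping.keys q.
      (?c M * mono_eval M x) * (?d N * mono_eval N x))"
    by (simp add: peval_sum peval_single mono_eval_add ac_simps)
  then show ?thesis
    unfolding peval_def by (simp add: sum_product)
qed

lemma Tvar_eq_monomial: "Tvar n a b = monomial (var_exp (n, a, b))"
  by (simp add: Tvar_def var_exp_def)

lemma peval_Tvar: "peval (Tvar n a b) x = x (n, a, b)"
  by (simp add: Tvar_eq_monomial peval_single mono_eval_var_exp)

lemma is_ideal_ideal_gen: "is_ideal (ideal_gen S)"
  unfolding ideal_gen_def is_ideal_def by auto

lemma ideal_gen_superset: "S \<subseteq> ideal_gen S"
  unfolding ideal_gen_def by auto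

lemma ideal_gen_minimal: "is_ideal I \<Longrightarrow> S \<subseteq> I \<Longrightarrow> ideal_gen S \<subseteq> I"
  unfolding ideal_gen_def by auto

lemma ideal_zero: "is_ideal I \<Longrightarrow> 0 \<in> I"
  unfolding is_ideal_def by auto

lemma ideal_add: "is_ideal I \<Longrightarrow> x \<in> I \<Longrightarrow> y \<in> I \<Longrightarrow> x + y \<in> I"
  unfolding is_ideal_def by auto

lemma ideal_mult_left: "is_ideal I \<Longrightarrow> x \<in> I \<Longrightarrow> r * x \<in> I"
  unfolding is_ideal_def by auto

lemma ideal_uminus: "is_ideal I \<Longrightarrow> x \<in> I \<Longrightarrow> - x \<in> I"
  using ideal_mult_left[of I x "- 1"] by simp

lemma ideal_sum: "is_ideal I \<Longrightarrow> (\<And>i. i \<in> A \<Longrightarrow> f i \<in> I) \<Longrightarrow> sum f A \<in> I"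
  by (induction A rule: infinite_finite_induct) (auto intro: ideal_zero ideal_add)

definition param_point :: "complex \<Rightarrow> ('k \<Rightarrow> complex) \<Rightarrow> ('k \<Rightarrow> complex) \<Rightarrow> 'k var \<Rightarrow> complex" where
  "param_point t u v = (\<lambda>(n, a, b). t ^ n * u a * v b)"

lemma pi1_eq_param_point:
  "pi1 B psi psibar = param_point ((B + (\<Sum>c\<in>UNIV. psi c * psibar c)) / 2) psibar psi"
  by (simp add: fun_eq_iff pi1_def param_point_def)

lemma param_point_eq_pi1:
  "param_point t u v = pi1 (2 * t - (\<Sum>c\<in>UNIV. v c * u c)) v u"
  by (simp add: fun_eq_iff pi1_def param_point_def)

lemma I1_eq_vanishing_param_points: "I1 = {f. \<forall>t u v. peval f (param_point t u v) = 0}"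
  unfolding I1_def by (metis pi1_eq_param_point param_point_eq_pi1)

lemma is_ideal_I1: "is_ideal I1"
  unfolding is_ideal_def I1_def by (simp add: peval_add peval_mult)

lemma is_ideal_I1': "is_ideal I1'"
  unfolding I1'_def by (rule is_ideal_ideal_gen)

lemma I1'_subset_I1: "I1' \<subseteq> I1"
  unfolding I1'_def
proof (rule ideal_gen_minimal[OF is_ideal_I1])
  show "{Tvar m a b * Tvar (n + k) c d - Tvar n a b * Tvar (m + k) c d | m n k a b c d. True} \<union>
        {Tvar m a1 b1 * Tvar n a2 b2 - Tvar m a1 b2 * Tvar n a2 b1 | m n a1 a2 b1 b2. True} \<subseteq> I1"
    unfolding I1_eq_vanishing_param_points
    by (auto simp: peval_diff peval_mult peval_Tvar param_point_def power_add ac_simps)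
qed

section \<open>Multidegrees of monomials\<close>

definition weight :: "('a \<Rightarrow> nat) \<Rightarrow> ('a \<Rightarrow>\<^sub>0 nat) \<Rightarrow> nat" where
  "weight h M = (\<Sum>v\<in>Poly_Mapping.keys M. Poly_Mapping.lookup M v * h v)"

definition total_degree :: "('a \<Rightarrow>\<^sub>0 nat) \<Rightarrow> nat" where
  "total_degree = weight (\<lambda>_. 1)"

lemma weight_add [simp]: "weight h (M + N) = weight h M + weight h N"
  unfolding weight_def
  by (rule setsum_keys_plus_distrib[where f = "\<lambda>k x. x * h k"]) (simp_all add: algebra_simps)

lemma weight_var_exp [simp]: "weight h (var_exp v) = h v"
  by (simp add: weight_def lookup_var_exp)

lemma weight_eq_0_iff: "weight h M = 0 \<longleftrightarrow> (\<forall>v\<in>Poly_Mapping.keys M. h v = 0)"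
  unfolding weight_def by (simp add: in_keys_iff)

lemma weight_pos_iff: "0 < weight h M \<longleftrightarrow> (\<exists>v\<in>Poly_Mapping.keys M. 0 < h v)"
  using weight_eq_0_iff[of h M] by auto

lemma total_degree_add [simp]: "total_degree (M + N) = total_degree M + total_degree N"
  by (simp add: total_degree_def)

lemma total_degree_var_exp [simp]: "total_degree (var_exp v) = 1"
  by (simp add: total_degree_def)

lemma total_degree_pos_iff: "0 < total_degree M \<longleftrightarrow> (\<exists>v. v \<in> Poly_Mapping.keys M)"
  by (simp add: total_degree_def weight_pos_iff)

lemma total_degree_eq_0_iff: "total_degree M = 0 \<longleftrightarrow> M = 0"
  using total_degree_pos_iff[of M] keys_eq_empty[of M] by auto

lemma total_degree_eq_1:
  assumes "total_degree M = 1"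
  obtains v where "M = var_exp v"
proof -
  obtain v where "v \<in> Poly_Mapping.keys M"
    using assms total_degree_pos_iff[of M] by auto
  then obtain R where M: "M = var_exp v + R"
    by (rule in_keys_split)
  with assms have "R = 0"
    by (simp add: total_degree_eq_0_iff)
  with M show thesis
    by (intro that) simp
qed

lemma split_two_keys:
  assumes "v \<in> Poly_Mapping.keys M" "2 \<le> total_degree M"
  obtains w R where "M = var_exp v + var_exp w + R"
proof -
  obtain R where M: "M = var_exp v + R"
    using assms(1) by (rule in_keys_split)
  with assms(2) have "0 < total_degree R"
    by simp
  then obtain w where "w \<in> Poly_Mapping.keys R"
    unfolding total_degree_pos_iff ..
  then obtain R' where "R = var_exp w + R'"
    by (rule in_keys_split)
  with M have "M = var_exp v + var_exp w + R'"
    by (simp add: add.assoc)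
  then show thesis
    by (rule that)
qed

lemma split_distinct_keys:
  assumes "v \<in> Poly_Mapping.keys M" "w \<in> Poly_Mapping.keys M" "v \<noteq> w"
  obtains R where "M = var_exp v + var_exp w + R"
proof -
  obtain R where M: "M = var_exp v + R"
    using assms(1) by (rule in_keys_split)
  with assms(2,3) have "w \<in> Poly_Mapping.keys R"
    by (simp add: in_keys_iff lookup_add lookup_var_exp)
  then obtain R' where "R = var_exp w + R'"
    by (rule in_keys_split)
  with M have "M = var_exp v + var_exp w + R'"
    by (simp add: add.assoc)
  then show thesis
    by (rule that)
qed

\<comment> \<open>The multidegree of T^(n)_ab is (n, e_a, e_b); the functions var_weight w0 wa wb are
  exactly the linear functionals on multidegrees.\<close>
definition var_weight :: "nat \<Rightarrow> ('k \<Rightarrow> nat) \<Rightarrow> ('k \<Rightarrow> nat) \<Rightarrow> 'k var \<Rightarrow> nat" where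
  "var_weight w0 wa wb = (\<lambda>(n, a, b). n * w0 + wa a + wb b)"

definition same_multidegree :: "('k var \<Rightarrow>\<^sub>0 nat) \<Rightarrow> ('k var \<Rightarrow>\<^sub>0 nat) \<Rightarrow> bool" where
  "same_multidegree M N \<longleftrightarrow>
     (\<forall>w0 wa wb. weight (var_weight w0 wa wb) M = weight (var_weight w0 wa wb) N)"

lemma same_multidegree_total_degree:
  assumes "same_multidegree M N"
  shows "total_degree M = total_degree N"
proof -
  have unit: "var_weight 0 (\<lambda>_. 1) (\<lambda>_. 0) = (\<lambda>_. 1)"
    by (simp add: var_weight_def fun_eq_iff)
  have "weight (var_weight 0 (\<lambda>_. 1) (\<lambda>_. 0)) M = weight (var_weight 0 (\<lambda>_. 1) (\<lambda>_. 0)) N"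
    using assms unfolding same_multidegree_def by blast
  then show ?thesis
    unfolding total_degree_def unit .
qed

lemma same_multidegree_var_exp:
  assumes "same_multidegree (var_exp v) (var_exp w)"
  shows "v = w"
proof -
  obtain n a b n' a' b' where vw: "v = (n, a, b)" "w = (n', a', b')"
    by (cases v, cases w) auto
  have W: "var_weight w0 wa wb v = var_weight w0 wa wb w" for w0 wa wb
    using assms by (simp add: same_multidegree_def)
  have "n = n'"
    using W[of 1 "\<lambda>_. 0" "\<lambda>_. 0"] by (simp add: vw var_weight_def)
  moreover have "a = a'"
    using W[of 0 "\<lambda>x. of_bool (x = a)" "\<lambda>_. 0"] by (simp add: vw var_weight_def of_bool_def split: if_splits)
  moreover have "b = b'"
    using W[of 0 "\<lambda>_. 0" "\<lambda>x. of_bool (x = b)"] by (simp add: vw var_weight_def of_bool_def split: if_splits)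
  ultimately show ?thesis
    using vw by simp
qed

lemma same_multidegree_row:
  assumes "same_multidegree M N" "(n, a, b) \<in> Poly_Mapping.keys M"
  obtains n' b' where "(n', a, b') \<in> Poly_Mapping.keys N"
proof -
  let ?h = "var_weight 0 (\<lambda>x. of_bool (x = a)) (\<lambda>_. 0)"
  have "0 < weight ?h M"
    using assms(2) by (force simp: weight_pos_iff var_weight_def)
  then have "0 < weight ?h N"
    using assms(1) by (simp add: same_multidegree_def)
  then show thesis
    using that by (force simp: weight_pos_iff var_weight_def split: if_splits)
qed

lemma same_multidegree_column:
  assumes "same_multidegree M N" "(n, a, b) \<in> Poly_Mapping.keys M"
  obtains n' a' where "(n', a', b) \<in> Poly_Mapping.keys N"
proof -
  let ?h = "var_weight 0 (\<lambda>_. 0) (\<lambda>x. of_bool (x = b))"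
  have "0 < weight ?h M"
    using assms(2) by (force simp: weight_pos_iff var_weight_def)
  then have "0 < weight ?h N"
    using assms(1) by (simp add: same_multidegree_def)
  then show thesis
    using that by (force simp: weight_pos_iff var_weight_def split: if_splits)
qed

section \<open>Binomials in the generated ideal\<close>

definition cong_I1' :: "(('k::finite) var \<Rightarrow>\<^sub>0 nat) \<Rightarrow> ('k var \<Rightarrow>\<^sub>0 nat) \<Rightarrow> bool" where
  "cong_I1' M N \<longleftrightarrow> monomial M - monomial N \<in> (I1' :: 'k cpoly set)"

lemma cong_I1'_refl: "cong_I1' M M"
  unfolding cong_I1'_def using ideal_zero[OF is_ideal_I1'] by simp

lemma cong_I1'_sym: "cong_I1' M N \<Longrightarrow> cong_I1' N M"
  unfolding cong_I1'_def using ideal_uminus[OF is_ideal_I1'] by fastforce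

lemma cong_I1'_trans: "cong_I1' M N \<Longrightarrow> cong_I1' N P \<Longrightarrow> cong_I1' M P"
  unfolding cong_I1'_def using ideal_add[OF is_ideal_I1'] by fastforce

lemma cong_I1'_add: "cong_I1' M N \<Longrightarrow> cong_I1' (M + R) (N + R)"
  unfolding cong_I1'_def
  using ideal_mult_left[OF is_ideal_I1', of "monomial M - monomial N" "monomial R"]
  by (simp add: right_diff_distrib mult_single add.commute)

lemma Tvar_mult_Tvar: "Tvar m a b * Tvar n c d = monomial (var_exp (m, a, b) + var_exp (n, c, d))"
  by (simp add: Tvar_eq_monomial mult_single)

lemma cong_I1'_shift:
  "cong_I1' (var_exp (m, a, b) + var_exp (n + k, c, d)) (var_exp (n, a, b) + var_exp (m + k, c, d))"
proof -
  have "Tvar m a b * Tvar (n + k) c d - Tvar n a b * Tvar (m + k) c d \<in> I1'"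
    unfolding I1'_def by (rule subsetD[OF ideal_gen_superset]) blast
  then show ?thesis
    unfolding cong_I1'_def Tvar_mult_Tvar .
qed

lemma cong_I1'_swap:
  "cong_I1' (var_exp (m, a1, b1) + var_exp (n, a2, b2)) (var_exp (m, a1, b2) + var_exp (n, a2, b1))"
proof -
  have "Tvar m a1 b1 * Tvar n a2 b2 - Tvar m a1 b2 * Tvar n a2 b1 \<in> I1'"
    unfolding I1'_def by (rule subsetD[OF ideal_gen_superset]) blast
  then show ?thesis
    unfolding cong_I1'_def Tvar_mult_Tvar .
qed

lemma cong_I1'_shift_to_zero:
  "cong_I1' (var_exp (n, a, b) + var_exp (m, c, d)) (var_exp (0, a, b) + var_exp (n + m, c, d))"
  using cong_I1'_shift[of n a b 0 m c d] by simp

lemma cong_I1'_row_column: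
  "cong_I1' (var_exp (n1, a, b1) + var_exp (n2, a2, b)) (var_exp (0, a, b) + var_exp (n1 + n2, a2, b1))"
  using cong_I1'_swap cong_I1'_shift_to_zero by (rule cong_I1'_trans)

lemma cong_I1'_factor_T0:
  fixes M :: "('k::finite) var \<Rightarrow>\<^sub>0 nat"
  assumes "(n1, a, b1) \<in> Poly_Mapping.keys M" "(n2, a2, b) \<in> Poly_Mapping.keys M" "2 \<le> total_degree M"
  obtains R where "cong_I1' M (var_exp (0, a, b) + R)" "same_multidegree M (var_exp (0, a, b) + R)"
proof (cases "(n1, a, b1) = (n2, a2, b)")
  case True
  with assms(1) have "(n1, a, b) \<in> Poly_Mapping.keys M"
    by simp
  then obtain w R where M: "M = var_exp (n1, a, b) + var_exp w + R"
    using assms(3) by (rule split_two_keys)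
  obtain m c d where w: "w = (m, c, d)"
    by (cases w)
  let ?R = "var_exp (n1 + m, c, d) + R"
  have "cong_I1' M (var_exp (0, a, b) + ?R)"
    using cong_I1'_add[OF cong_I1'_shift_to_zero] by (simp add: M w add.assoc)
  moreover have "same_multidegree M (var_exp (0, a, b) + ?R)"
    by (simp add: M w same_multidegree_def var_weight_def algebra_simps)
  ultimately show thesis
    by (rule that)
next
  case False
  with assms(1,2) obtain R where M: "M = var_exp (n1, a, b1) + var_exp (n2, a2, b) + R"
    by (rule split_distinct_keys)
  let ?R = "var_exp (n1 + n2, a2, b1) + R"
  have "cong_I1' M (var_exp (0, a, b) + ?R)"
    using cong_I1'_add[OF cong_I1'_row_column] by (simp add: M add.assoc)
  moreover have "same_multidegree M (var_exp (0, a, b) + ?R)"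
    by (simp add: M same_multidegree_def var_weight_def algebra_simps)
  ultimately show thesis
    by (rule that)
qed

lemma same_multidegree_common_factor_T0:
  fixes M N :: "('k::finite) var \<Rightarrow>\<^sub>0 nat"
  assumes "same_multidegree M N" "2 \<le> total_degree M"
  obtains t R R' where "cong_I1' M (var_exp t + R)" "cong_I1' N (var_exp t + R')"
    "same_multidegree R R'" "total_degree R < total_degree M"
proof -
  obtain n a b where v: "(n, a, b) \<in> Poly_Mapping.keys M"
    using assms(2) total_degree_pos_iff[of M] by auto
  obtain n1 b1 where row: "(n1, a, b1) \<in> Poly_Mapping.keys N"
    using assms(1) v by (rule same_multidegree_row)
  obtain n2 a2 where col: "(n2, a2, b) \<in> Poly_Mapping.keys N"
    using assms(1) v by (rule same_multidegree_column)
  obtain R where R: "cong_I1' M (var_exp (0, a, b) + R)" "same_multidegree M (var_exp (0, a, b) + R)"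
    using v v assms(2) by (rule cong_I1'_factor_T0)
  from assms have "2 \<le> total_degree N"
    using same_multidegree_total_degree by metis
  with row col obtain R' where
    R': "cong_I1' N (var_exp (0, a, b) + R')" "same_multidegree N (var_exp (0, a, b) + R')"
    by (rule cong_I1'_factor_T0)
  have "same_multidegree R R'"
    using assms(1) R(2) R'(2) by (simp add: same_multidegree_def)
  moreover have "total_degree R < total_degree M"
    using same_multidegree_total_degree[OF R(2)] by simp
  ultimately show thesis
    using R(1) R'(1) that by blast
qed

lemma same_multidegree_imp_cong_I1':
  fixes M N :: "('k::finite) var \<Rightarrow>\<^sub>0 nat"
  assumes "same_multidegree M N"
  shows "cong_I1' M N"
  using assms
proof (induction "total_degree M" arbitrary: M N rule: less_induct)
  case less
  have deg: "total_degree N = total_degree M"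
    using same_multidegree_total_degree[OF less.prems] by simp
  consider "total_degree M = 0" | "total_degree M = 1" | "2 \<le> total_degree M"
    by linarith
  then show ?case
  proof cases
    case 1
    with deg show ?thesis
      by (simp add: total_degree_eq_0_iff cong_I1'_refl)
  next
    case 2
    then obtain v where "M = var_exp v"
      by (rule total_degree_eq_1)
    moreover from 2 deg obtain w where "N = var_exp w"
      by (metis total_degree_eq_1)
    ultimately show ?thesis
      using less.prems same_multidegree_var_exp cong_I1'_refl by blast
  next
    case 3
    with less.prems obtain t R R' where
      R: "cong_I1' M (var_exp t + R)" "cong_I1' N (var_exp t + R')"
      and "same_multidegree R R'" "total_degree R < total_degree M"
      by (rule same_multidegree_common_factor_T0)
    then have "cong_I1' R R'"
      using less.hyps by blast
    then have "cong_I1' (var_exp t + R) (var_exp t + R')"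
      using cong_I1'_add[of R R' "var_exp t"] by (simp add: add.commute)
    then show ?thesis
      using R cong_I1'_trans cong_I1'_sym by blast
  qed
qed

section \<open>Independence of characters\<close>

lemma characters_linearly_independent:
  fixes X :: "('g \<Rightarrow> 'a::idom) set" and mul :: "'g \<Rightarrow> 'g \<Rightarrow> 'g"
  assumes "finite X"
    and "\<And>\<chi> g h. \<chi> \<in> X \<Longrightarrow> \<chi> (mul g h) = \<chi> g * \<chi> h"
    and "\<And>\<chi>. \<chi> \<in> X \<Longrightarrow> \<chi> \<noteq> (\<lambda>_. 0)"
    and "\<And>g. (\<Sum>\<chi>\<in>X. c \<chi> * \<chi> g) = 0"
  shows "\<forall>\<chi>\<in>X. c \<chi> = 0"
  using assms
proof (induction X arbitrary: c rule: finite_induct)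
  case empty
  then show ?case by simp
next
  case (insert \<chi>0 X)
  note mult = insert.prems(1) and nonzero = insert.prems(2) and vanish = insert.prems(3)
  have diff: "c \<chi> * (\<chi> h - \<chi>0 h) = 0" if "\<chi> \<in> X" for \<chi> h
  proof -
    have "\<forall>\<chi>\<in>X. c \<chi> * (\<chi> h - \<chi>0 h) = 0"
    proof (rule insert.IH)
      show "\<chi> (mul g h') = \<chi> g * \<chi> h'" "\<chi> \<noteq> (\<lambda>_. 0)" if "\<chi> \<in> X" for \<chi> g h'
        using that mult nonzero by simp_all
      fix g
      have "(\<Sum>\<chi>\<in>X. c \<chi> * (\<chi> h - \<chi>0 h) * \<chi> g) = (\<Sum>\<chi>\<in>insert \<chi>0 X. c \<chi> * (\<chi> h - \<chi>0 h) * \<chi> g)"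
        using insert.hyps by simp
      also have "\<dots> = (\<Sum>\<chi>\<in>insert \<chi>0 X. c \<chi> * \<chi> (mul h g)) - \<chi>0 h * (\<Sum>\<chi>\<in>insert \<chi>0 X. c \<chi> * \<chi> g)"
        by (simp add: mult sum_distrib_left sum_subtractf algebra_simps)
      also have "\<dots> = 0"
        using vanish by simp
      finally show "(\<Sum>\<chi>\<in>X. c \<chi> * (\<chi> h - \<chi>0 h) * \<chi> g) = 0" .
    qed
    with that show ?thesis by blast
  qed
  have cX: "c \<chi> = 0" if "\<chi> \<in> X" for \<chi>
  proof -
    from that insert.hyps(2) have "\<chi> \<noteq> \<chi>0"
      by auto
    then obtain h where "\<chi> h \<noteq> \<chi>0 h"
      by (meson ext)
    with diff[OF that, of h] show ?thesis
      by simp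
  qed
  obtain g where "\<chi>0 g \<noteq> 0"
    using nonzero[of \<chi>0] by auto
  moreover have "c \<chi>0 * \<chi>0 g = 0"
    using vanish[of g] cX insert.hyps by simp
  ultimately show ?case
    using cX by simp
qed

lemma characters_coeff_sum_eq_zero:
  fixes \<chi> :: "'i \<Rightarrow> 'g \<Rightarrow> 'a::idom" and mul :: "'g \<Rightarrow> 'g \<Rightarrow> 'g"
  assumes "finite I"
    and "\<And>i g h. i \<in> I \<Longrightarrow> \<chi> i (mul g h) = \<chi> i g * \<chi> i h"
    and "\<And>i. i \<in> I \<Longrightarrow> \<chi> i \<noteq> (\<lambda>_. 0)"
    and "\<And>g. (\<Sum>i\<in>I. c i * \<chi> i g) = 0"
  shows "(\<Sum>i\<in>{i\<in>I. \<chi> i = \<psi>}. c i) = 0"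
proof -
  define d where "d \<psi> = (\<Sum>i\<in>{i\<in>I. \<chi> i = \<psi>}. c i)" for \<psi>
  have "\<forall>\<psi>\<in>\<chi> ` I. d \<psi> = 0"
  proof (rule characters_linearly_independent[where mul = mul])
    show "finite (\<chi> ` I)"
      using assms(1) by simp
    show "\<psi> (mul g h) = \<psi> g * \<psi> h" "\<psi> \<noteq> (\<lambda>_. 0)" if "\<psi> \<in> \<chi> ` I" for \<psi> g h
      using that assms(2,3) by auto
    fix g
    have "(\<Sum>\<psi>\<in>\<chi> ` I. d \<psi> * \<psi> g) = (\<Sum>\<psi>\<in>\<chi> ` I. \<Sum>i\<in>{i\<in>I. \<chi> i = \<psi>}. c i * \<chi> i g)"
      unfolding d_def by (auto simp: sum_distrib_right intro!: sum.cong)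
    also have "\<dots> = (\<Sum>i\<in>I. c i * \<chi> i g)"
      using assms(1) by (rule sum.image_gen[symmetric])
    finally show "(\<Sum>\<psi>\<in>\<chi> ` I. d \<psi> * \<psi> g) = 0"
      using assms(4) by simp
  qed
  moreover have "d \<psi> = 0" if "\<psi> \<notin> \<chi> ` I"
    using that unfolding d_def by (auto intro: sum.neutral)
  ultimately show ?thesis
    unfolding d_def by blast
qed

type_synonym 'k param = "complex \<times> ('k \<Rightarrow> complex) \<times> ('k \<Rightarrow> complex)"

definition mono_char :: "('k var \<Rightarrow>\<^sub>0 nat) \<Rightarrow> 'k param \<Rightarrow> complex" where
  "mono_char M = (\<lambda>(t, u, v). mono_eval M (param_point t u v))"

definition param_mult :: "'k param \<Rightarrow> 'k param \<Rightarrow> 'k param" where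
  "param_mult = (\<lambda>(t, u, v) (t', u', v'). (t * t', \<lambda>a. u a * u' a, \<lambda>b. v b * v' b))"

lemma mono_char_mult: "mono_char M (param_mult p q) = mono_char M p * mono_char M q"
proof -
  obtain t u v t' u' v' where pq: "p = (t, u, v)" "q = (t', u', v')"
    by (cases p, cases q) auto
  have "param_point (t * t') (\<lambda>a. u a * u' a) (\<lambda>b. v b * v' b)
      = (\<lambda>x. param_point t u v x * param_point t' u' v' x)"
    by (auto simp: fun_eq_iff param_point_def power_mult_distrib)
  then show ?thesis
    by (simp add: pq mono_char_def param_mult_def mono_eval_mult_point)
qed

lemma mono_char_nonzero: "mono_char M \<noteq> (\<lambda>_. 0)"
proof -
  have "mono_char M (1, \<lambda>_. 1, \<lambda>_. 1) = 1"
    by (simp add: mono_char_def mono_eval_def param_point_def case_prod_unfold)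
  then show ?thesis
    by (metis one_neq_zero)
qed

lemma mono_eval_power_point: "mono_eval M (\<lambda>v. c ^ h v) = c ^ weight h M"
  unfolding mono_eval_def weight_def
  by (simp add: power_sum power_mult[symmetric] ac_simps)

lemma mono_char_eq_imp_same_multidegree:
  fixes M N :: "'k var \<Rightarrow>\<^sub>0 nat"
  assumes "mono_char M = mono_char N"
  shows "same_multidegree M N"
  unfolding same_multidegree_def
proof (intro allI)
  fix w0 and wa wb :: "'k \<Rightarrow> nat"
  have "param_point (2 ^ w0) (\<lambda>a. 2 ^ wa a) (\<lambda>b. 2 ^ wb b) = (\<lambda>v. 2 ^ var_weight w0 wa wb v)"
    by (auto simp: fun_eq_iff param_point_def var_weight_def power_add power_mult[symmetric] ac_simps)
  then have "(2::complex) ^ weight (var_weight w0 wa wb) M = 2 ^ weight (var_weight w0 wa wb) N"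
    using fun_cong[OF assms, of "(2 ^ w0, \<lambda>a. 2 ^ wa a, \<lambda>b. 2 ^ wb b)"]
    by (simp add: mono_char_def mono_eval_power_point)
  then have "of_nat (2 ^ weight (var_weight w0 wa wb) M) = (of_nat (2 ^ weight (var_weight w0 wa wb) N) :: complex)"
    by simp
  then have "(2::nat) ^ weight (var_weight w0 wa wb) M = 2 ^ weight (var_weight w0 wa wb) N"
    by (simp only: of_nat_eq_iff)
  then show "weight (var_weight w0 wa wb) M = weight (var_weight w0 wa wb) N"
    by simp
qed

lemma I1_coeff_sum_eq_zero:
  fixes f :: "('k::finite) cpoly"
  assumes "f \<in> I1"
  shows "(\<Sum>M\<in>{M\<in>Poly_Mapping.keys f. mono_char M = \<psi>}. Poly_Mapping.lookup f M) = 0"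
proof (rule characters_coeff_sum_eq_zero[where mul = param_mult])
  fix p :: "'k param"
  obtain t u v where p: "p = (t, u, v)"
    by (cases p) auto
  have "peval f (param_point t u v) = 0"
    using assms unfolding I1_eq_vanishing_param_points by blast
  then show "(\<Sum>M\<in>Poly_Mapping.keys f. Poly_Mapping.lookup f M * mono_char M p) = 0"
    by (simp add: p peval_def mono_char_def)
qed (simp_all add: mono_char_mult mono_char_nonzero)

lemma diff_replace_monomials_in_I1':
  assumes "\<And>M. M \<in> Poly_Mapping.keys f \<Longrightarrow> cong_I1' M (\<phi> M)"
  shows "f - (\<Sum>M\<in>Poly_Mapping.keys f. Poly_Mapping.single (\<phi> M) (Poly_Mapping.lookup f M)) \<in> I1'"
proof -
  have "f - (\<Sum>M\<in>Poly_Mapping.keys f. Poly_Mapping.single (\<phi> M) (Poly_Mapping.lookup f M))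
      = (\<Sum>M\<in>Poly_Mapping.keys f. Poly_Mapping.single 0 (Poly_Mapping.lookup f M) * (monomial M - monomial (\<phi> M)))"
    by (subst (1) poly_mapping_sum_single[symmetric])
       (simp add: sum_subtractf right_diff_distrib mult_single)
  also have "\<dots> \<in> I1'"
    using assms unfolding cong_I1'_def
    by (intro ideal_sum[OF is_ideal_I1'] ideal_mult_left[OF is_ideal_I1'])
  finally show ?thesis .
qed

lemma I1_sum_char_representatives_eq_0:
  assumes "f \<in> I1" and rep_eq_iff: "\<And>M N. rep M = rep N \<longleftrightarrow> mono_char M = mono_char N"
  shows "(\<Sum>M\<in>Poly_Mapping.keys f. Poly_Mapping.single (rep M) (Poly_Mapping.lookup f M)) = 0"
    (is "?g = 0")
proof (rule poly_mapping_eqI)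
  fix K
  show "Poly_Mapping.lookup ?g K = Poly_Mapping.lookup 0 K"
  proof (cases "\<exists>M0\<in>Poly_Mapping.keys f. rep M0 = K")
    case True
    then obtain M0 where "M0 \<in> Poly_Mapping.keys f" "rep M0 = K" ..
    then have "{M\<in>Poly_Mapping.keys f. rep M = K} = {M\<in>Poly_Mapping.keys f. mono_char M = mono_char M0}"
      using rep_eq_iff by auto
    then show ?thesis
      using I1_coeff_sum_eq_zero[OF assms(1)] by (simp add: lookup_sum_single)
  next
    case False
    then have none: "{M\<in>Poly_Mapping.keys f. rep M = K} = {}"
      by auto
    show ?thesis
      unfolding lookup_sum_single[OF finite_keys] none by simp
  qed
qed

lemma I1_subset_I1': "(I1 :: ('k::finite) cpoly set) \<subseteq> I1'"
proof
  fix f :: "'k cpoly"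
  assume f: "f \<in> I1"
  define rep where "rep M = (SOME N. mono_char N = mono_char M)" for M :: "'k var \<Rightarrow>\<^sub>0 nat"
  have char_rep: "mono_char (rep M) = mono_char M" for M
    unfolding rep_def by (rule someI) (rule refl)
  have "rep M = rep N \<longleftrightarrow> mono_char M = mono_char N" for M N
    by (metis char_rep rep_def)
  with f have "(\<Sum>M\<in>Poly_Mapping.keys f. Poly_Mapping.single (rep M) (Poly_Mapping.lookup f M)) = 0"
    by (rule I1_sum_char_representatives_eq_0)
  moreover have "f - (\<Sum>M\<in>Poly_Mapping.keys f. Poly_Mapping.single (rep M) (Poly_Mapping.lookup f M)) \<in> I1'"
    by (intro diff_replace_monomials_in_I1' same_multidegree_imp_cong_I1' mono_char_eq_imp_same_multidegree)
       (simp add: char_rep)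
  ultimately show "f \<in> I1'"
    by simp
qed

theorem mainTheorem6:
  assumes "is_radical (I1' :: ('k::finite) cpoly set)"
  shows "(I1 :: 'k cpoly set) = I1'"
  using I1_subset_I1' I1'_subset_I1 by (rule subset_antisym)

end
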